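(* Let $1<a<b$ be coprime integers. For all $\mathbf{n},\mathbf{n}'\in C_{\mathbb{R}}$ we have $B(\mathbf{n},\mathbf{n}')\ge0$; in particular $Q(\mathbf{n})\ge0$ for $\mathbf{n}\in C_\mathbb{R}$. Moreover, for every $\mathbf{n}\in C_{\mathbb{R}}$, \[ Q(\mathbf{n})\ge \frac{1}{|G|}\,\|\mathbf{n}\|_\infty^2, \] where $\|\mathbf{n}\|_\infty=\max_{i\in G}|n_i|$.
   Context: Fix coprime integers $1<a<b$. Let $g:\mathbb{Z}^2\to\mathbb{Z}$, $g(x,y)=ab-ax-by$, and $G=\{(x,y)\in\mathbb{Z}_{\ge1}^2: g(x,y)>0\}$. Equip $G$ with the partial order $i\preceq j$ iff $g(j)-g(i)\in\{ma+nb: m,n\in\mathbb{Z}_{\ge0}\}$. Let \[ C_{\mathbb{R}}=\{\mathbf{n}=(n_i)_{i\in G}\in\mathbb{R}^G:\ n_i\ge0 \text{ for all } i,\ \ n_j\ge n_i \text{ whenever } i\preceq j\}. \] Define $K(d)=\mathbf{1}_{d\ge0}-\mathbf{1}_{d\ge a}-\mathbf{1}_{d\ge b}+\mathbf{1}_{d\ge a+b}$ for $d\in\mathbb{Z}$, the quadratic form $Q(\mathbf{n})=\sum_{i,j\in G}K(g(j)-g(i))\,n_in_j$ on $\mathbb{R}^G$, and the associated symmetric bilinear form \[ B(\mathbf{n},\mathbf{n}')=\tfrac12\sum_{i,j\in G}K(g(j)-g(i))\,(n_in'_j+n'_in_j), \] so that $B(\mathbf{n},\mathbf{n})=Q(\mathbf{n})$.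 *)

theory Defs
  imports Complex_Main
begin

text \<open>Vectors in R^G are represented as functions (int \<times> int) \<Rightarrow> real; only values on G matter.\<close>

definition gfun :: "int \<Rightarrow> int \<Rightarrow> int \<times> int \<Rightarrow> int" where
  "gfun a b p = a * b - a * fst p - b * snd p"

definition Gset :: "int \<Rightarrow> int \<Rightarrow> (int \<times> int) set" where
  "Gset a b = {p. fst p \<ge> 1 \<and> snd p \<ge> 1 \<and> gfun a b p > 0}"

definition numsemi :: "int \<Rightarrow> int \<Rightarrow> int set" where
  "numsemi a b = {int m * a + int n * b | m n :: nat. True}"

definition prec :: "int \<Rightarrow> int \<Rightarrow> int \<times> int \<Rightarrow> int \<times> int \<Rightarrow> bool" where
  "prec a b i j \<longleftrightarrow> gfun a b j - gfun a b i \<in> numsemi a b"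

definition coneR :: "int \<Rightarrow> int \<Rightarrow> ((int \<times> int) \<Rightarrow> real) set" where
  "coneR a b = {n. (\<forall>i\<in>Gset a b. n i \<ge> 0) \<and>
      (\<forall>i\<in>Gset a b. \<forall>j\<in>Gset a b. prec a b i j \<longrightarrow> n j \<ge> n i)}"

definition Kfun :: "int \<Rightarrow> int \<Rightarrow> int \<Rightarrow> real" where
  "Kfun a b d = (if d \<ge> 0 then 1 else 0) - (if d \<ge> a then 1 else 0)
               - (if d \<ge> b then 1 else 0) + (if d \<ge> a + b then 1 else 0)"

definition Bform :: "int \<Rightarrow> int \<Rightarrow> ((int \<times> int) \<Rightarrow> real) \<Rightarrow> ((int \<times> int) \<Rightarrow> real) \<Rightarrow> real" where
  "Bform a b n n' = (1/2) * (\<Sum>i\<in>Gset a b. \<Sum>j\<in>Gset a b.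
       Kfun a b (gfun a b j - gfun a b i) * (n i * n' j + n' i * n j))"

definition Qform :: "int \<Rightarrow> int \<Rightarrow> ((int \<times> int) \<Rightarrow> real) \<Rightarrow> real" where
  "Qform a b n = (\<Sum>i\<in>Gset a b. \<Sum>j\<in>Gset a b.
       Kfun a b (gfun a b j - gfun a b i) * (n i * n j))"

definition supnorm :: "int \<Rightarrow> int \<Rightarrow> ((int \<times> int) \<Rightarrow> real) \<Rightarrow> real" where
  "supnorm a b n = Max ((\<lambda>i. \<bar>n i\<bar>) ` Gset a b)"

end

theory Submission
  imports Defs "HOL-Library.Indicator_Function"
begin

(* Every n in the cone is nonnegative and antitone for the coordinatewise order on G, a weaker
   condition than the one defining the cone.  Peeling off its least positive value writes n as a
   positive combination of indicators of down-closed subsets of G (Young diagrams), so by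
   bilinearity it suffices to show S(D,E) + S(E,D) >= 0 and S(D,D) >= 1 for Young diagrams D, E,
   where S(D,E) is the sum of K(g j - g i) over i in D and j in E.  The sup-norm bound then follows
   by induction on the number of layers, each step being an instance of Cauchy-Schwarz.

   Since a < b, K(d) = [0 <= d < a] - [b <= d < a + b], and g(x, y - 1) = g(x, y) + b, so summing
   K over a column of D telescopes: for each column, S(D,E) counts the cells of E whose g-value
   lies in the window of length a starting at the g-value of the top cell, minus those in the
   window starting at the floor (height 0).  Shifting E down by the column height cancels most of
   the second kind against the first, leaving the "hits" at the top minus the "misses" at the
   bottom.  An explicit injection sends the misses for (D,E) to hits for (E,D), which gives the
   symmetric inequality; for D = E it never reaches the top cell of the last column, which gives
   S(D,D) >= 1. *)

section \<open>Positivity from down-closed layers\<close>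

definition bilin :: "'a set \<Rightarrow> ('a \<Rightarrow> 'a \<Rightarrow> real) \<Rightarrow> ('a \<Rightarrow> real) \<Rightarrow> ('a \<Rightarrow> real) \<Rightarrow> real" where
  "bilin G k n m = (\<Sum>i\<in>G. \<Sum>j\<in>G. k i j * (n i * m j))"

lemma bilin_cong:
  assumes "\<And>i. i \<in> G \<Longrightarrow> n i = n' i" and "\<And>i. i \<in> G \<Longrightarrow> m i = m' i"
  shows "bilin G k n m = bilin G k n' m'"
  unfolding bilin_def using assms by (auto intro!: sum.cong)

lemma bilin_add_left: "bilin G k (\<lambda>i. v * n i + n' i) m = v * bilin G k n m + bilin G k n' m"
  unfolding bilin_def by (simp add: algebra_simps sum.distrib sum_distrib_left)

lemma bilin_add_right: "bilin G k n (\<lambda>j. v * m j + m' j) = v * bilin G k n m + bilin G k n m'"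
  unfolding bilin_def by (simp add: algebra_simps sum.distrib sum_distrib_left)

lemma bilin_indicator:
  assumes "finite G" "D \<subseteq> G" "E \<subseteq> G"
  shows "bilin G k (indicator D) (indicator E) = (\<Sum>i\<in>D. \<Sum>j\<in>E. k i j)"
proof -
  have "bilin G k (indicator D) (indicator E) =
      (\<Sum>i\<in>G. of_bool (i \<in> D) * (\<Sum>j\<in>G. of_bool (j \<in> E) * k i j))"
    unfolding bilin_def indicator_def by (simp add: sum_distrib_left mult_ac)
  also have "\<dots> = (\<Sum>i\<in>D. \<Sum>j\<in>E. k i j)"
    using assms by (simp add: Int_absorb1)
  finally show ?thesis .
qed

lemma sq_add_le_mult_add_one:
  fixes v x Q c :: real
  assumes "0 \<le> Q" and "0 \<le> c" and "x\<^sup>2 \<le> Q * c"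
  shows "(v + x)\<^sup>2 \<le> (v\<^sup>2 + Q) * (c + 1)"
proof (cases "c = 0")
  case True
  then show ?thesis using assms by simp
next
  case False
  then have "0 < c" using assms(2) by simp
  have "(v * c - x)\<^sup>2 \<le> c * (v\<^sup>2 * c + Q - 2 * v * x)"
    using assms(3) by (simp add: algebra_simps power2_eq_square)
  then have "0 \<le> c * (v\<^sup>2 * c + Q - 2 * v * x)"
    using zero_le_power2 order_trans by blast
  then have "0 \<le> v\<^sup>2 * c + Q - 2 * v * x"
    using \<open>0 < c\<close> by (simp add: zero_le_mult_iff)
  moreover have "(v\<^sup>2 + Q) * (c + 1) - (v + x)\<^sup>2 = (v\<^sup>2 * c + Q - 2 * v * x) + (Q * c - x\<^sup>2)"
    by (simp add: algebra_simps power2_eq_square)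
  ultimately show ?thesis using assms(3) by linarith
qed

lemma sum_int_telescope:
  fixes f :: "int \<Rightarrow> 'a::ab_group_add"
  assumes "0 \<le> c"
  shows "(\<Sum>y\<in>{1..c}. f y - f (y - 1)) = f c - f 0"
  using assms
proof (induction c rule: int_ge_induct)
  case (step i)
  then have "{1..i + 1} = insert (i + 1) {1..i}" by auto
  with step show ?case by simp
qed simp

lemma card_filter_split:
  assumes "finite A"
  shows "card {x\<in>A. P x} = card {x\<in>A. P x \<and> Q x} + card {x\<in>A. P x \<and> \<not> Q x}"
proof -
  have "{x\<in>A. P x} = {x\<in>A. P x \<and> Q x} \<union> {x\<in>A. P x \<and> \<not> Q x}" by auto
  then show ?thesis using assms by (simp add: card_Un_disjoint disjoint_iff)
qed

locale layer_cake =
  fixes G :: "'a set" and below :: "'a \<Rightarrow> 'a \<Rightarrow> bool"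
  assumes finite_G: "finite G"
begin

definition down_closed :: "'a set \<Rightarrow> bool" where
  "down_closed D \<longleftrightarrow> D \<subseteq> G \<and> (\<forall>i\<in>D. \<forall>j\<in>G. below j i \<longrightarrow> j \<in> D)"

definition antitone_nonneg :: "('a \<Rightarrow> real) set" where
  "antitone_nonneg = {n. (\<forall>i\<in>G. 0 \<le> n i) \<and> (\<forall>i\<in>G. \<forall>j\<in>G. below j i \<longrightarrow> n i \<le> n j)}"

definition pos_supp :: "('a \<Rightarrow> real) \<Rightarrow> 'a set" where
  "pos_supp n = {i\<in>G. 0 < n i}"

lemma finite_down_closed: "down_closed D \<Longrightarrow> finite D"
  unfolding down_closed_def using finite_G finite_subset by blast

lemma finite_pos_supp: "finite (pos_supp n)"
  unfolding pos_supp_def using finite_G by simp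

lemma down_closed_pos_supp: "n \<in> antitone_nonneg \<Longrightarrow> down_closed (pos_supp n)"
  unfolding down_closed_def antitone_nonneg_def pos_supp_def by (auto intro: less_le_trans)

lemma antitone_nonneg_peel:
  assumes n: "n \<in> antitone_nonneg" and ne: "pos_supp n \<noteq> {}"
  obtains v m where "0 < v" "m \<in> antitone_nonneg" "pos_supp m \<subset> pos_supp n"
    "\<And>i. i \<in> G \<Longrightarrow> n i = v * indicator (pos_supp n) i + m i"
proof -
  define D where "D = pos_supp n"
  define v where "v = Min (n ` D)"
  define m where "m = (\<lambda>i. n i - v * indicator D i)"
  have "v \<in> n ` D"
    unfolding v_def D_def using finite_pos_supp ne by (intro Min_in) auto
  then obtain i0 where i0: "i0 \<in> D" "n i0 = v" by auto
  have v_le: "v \<le> n i" if "i \<in> D" for i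
    unfolding v_def using that finite_pos_supp by (intro Min_le) (auto simp: D_def)
  have "0 < v" using i0 unfolding D_def pos_supp_def by auto
  have nonneg: "0 \<le> n i" if "i \<in> G" for i
    using n that unfolding antitone_nonneg_def by auto
  have "m \<in> antitone_nonneg"
    unfolding antitone_nonneg_def
  proof (intro CollectI conjI ballI impI)
    fix i assume "i \<in> G"
    then show "0 \<le> m i" using nonneg v_le by (auto simp: m_def indicator_def)
  next
    fix i j assume ij: "i \<in> G" "j \<in> G" "below j i"
    then have "n i \<le> n j" using n unfolding antitone_nonneg_def by auto
    moreover have "j \<in> D" if "i \<in> D"
      using down_closed_pos_supp[OF n] that ij unfolding down_closed_def D_def by blast
    moreover have "n i = 0" if "i \<notin> D"
      using that nonneg[OF ij(1)] ij(1) unfolding D_def pos_supp_def by auto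
    ultimately show "m i \<le> m j"
      using nonneg[OF ij(2)] v_le by (auto simp: m_def indicator_def)
  qed
  moreover have "pos_supp m \<subset> D"
  proof -
    have "pos_supp m \<subseteq> D"
      unfolding pos_supp_def D_def m_def by (auto simp: indicator_def)
    moreover have "i0 \<notin> pos_supp m" using i0 unfolding pos_supp_def m_def by simp
    ultimately show ?thesis using i0(1) by blast
  qed
  moreover have "n i = v * indicator D i + m i" for i
    unfolding m_def by simp
  ultimately show thesis using that \<open>0 < v\<close> unfolding D_def by blast
qed

lemma antitone_nonneg_induct [consumes 1, case_names zero layer]:
  assumes "n \<in> antitone_nonneg"
    and zero: "\<And>n. (\<And>i. i \<in> G \<Longrightarrow> n i = 0) \<Longrightarrow> P n"
    and layer: "\<And>n m v D. m \<in> antitone_nonneg \<Longrightarrow> P m \<Longrightarrow> 0 < v \<Longrightarrow> down_closed D \<Longrightarrow>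
      pos_supp m \<subset> D \<Longrightarrow> (\<And>i. i \<in> G \<Longrightarrow> n i = v * indicator D i + m i) \<Longrightarrow> P n"
  shows "P n"
  using assms(1)
proof (induction "card (pos_supp n)" arbitrary: n rule: less_induct)
  case less
  show ?case
  proof (cases "pos_supp n = {}")
    case True
    then show ?thesis
      using less.prems by (intro zero) (force simp: antitone_nonneg_def pos_supp_def)
  next
    case False
    obtain v m where peel: "0 < v" "m \<in> antitone_nonneg"
      "pos_supp m \<subset> pos_supp n" "\<And>i. i \<in> G \<Longrightarrow> n i = v * indicator (pos_supp n) i + m i"
      using antitone_nonneg_peel[OF less.prems False] by blast
    have "card (pos_supp m) < card (pos_supp n)"
      using finite_pos_supp peel(3) by (rule psubset_card_mono)
    then have "P m" using peel(2) by (rule less.hyps)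
    show ?thesis
      using peel(2) \<open>P m\<close> peel(1) down_closed_pos_supp[OF less.prems] peel(3,4) by (rule layer)
  qed
qed

lemma layer_cake_nonneg:
  assumes "n \<in> antitone_nonneg"
    and layers: "\<And>D. down_closed D \<Longrightarrow> 0 \<le> L (indicator D)"
    and additive: "\<And>v n m. L (\<lambda>i. v * n i + m i) = v * L n + L m"
    and cong: "\<And>n m. (\<And>i. i \<in> G \<Longrightarrow> n i = m i) \<Longrightarrow> L n = L m"
  shows "0 \<le> L n"
  using assms(1)
proof (induction rule: antitone_nonneg_induct)
  case (zero n)
  have "L (\<lambda>_. 0) = 0" using additive[of 1 "\<lambda>_. 0" "\<lambda>_. 0"] by simp
  then show ?case using cong[of n "\<lambda>_. 0"] zero by simp
next
  case (layer n m v D)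
  then have "L n = v * L (indicator D) + L m"
    using cong[of n "\<lambda>i. v * indicator D i + m i"] additive by simp
  then show ?case using layer layers[of D] by simp
qed

lemma indicator_antitone_nonneg: "down_closed D \<Longrightarrow> indicator D \<in> antitone_nonneg"
  unfolding down_closed_def antitone_nonneg_def by (auto simp: indicator_def)

lemma pos_supp_add_layer:
  assumes "m \<in> antitone_nonneg" "0 < v" "down_closed D" "pos_supp m \<subseteq> D"
    and ident: "\<And>i. i \<in> G \<Longrightarrow> n i = v * indicator D i + m i"
  shows "pos_supp n = D"
proof (intro equalityI subsetI)
  fix i assume i: "i \<in> pos_supp n"
  show "i \<in> D"
  proof (rule ccontr)
    assume "i \<notin> D"
    with i ident[of i] have "n i = m i" unfolding pos_supp_def by (simp add: indicator_def)
    with i have "i \<in> pos_supp m" unfolding pos_supp_def by simp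
    with \<open>i \<notin> D\<close> \<open>pos_supp m \<subseteq> D\<close> show False by blast
  qed
next
  fix i assume "i \<in> D"
  then have "i \<in> G" using \<open>down_closed D\<close> unfolding down_closed_def by auto
  then have "0 \<le> m i" using \<open>m \<in> antitone_nonneg\<close> unfolding antitone_nonneg_def by auto
  then show "i \<in> pos_supp n"
    using \<open>i \<in> G\<close> \<open>i \<in> D\<close> \<open>0 < v\<close> ident unfolding pos_supp_def by simp
qed

context
  fixes k :: "'a \<Rightarrow> 'a \<Rightarrow> real"
  assumes layers_sym_nonneg: "\<And>D E. down_closed D \<Longrightarrow> down_closed E \<Longrightarrow>
    0 \<le> bilin G k (indicator D) (indicator E) + bilin G k (indicator E) (indicator D)"
begin

lemma bilin_sym_nonneg:
  assumes n: "n \<in> antitone_nonneg" and m: "m \<in> antitone_nonneg"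
  shows "0 \<le> bilin G k n m + bilin G k m n"
proof -
  let ?S = "\<lambda>n m. bilin G k n m + bilin G k m n"
  have additive: "?S (\<lambda>i. v * n i + n' i) m = v * ?S n m + ?S n' m" for n n' m v
    unfolding bilin_add_left bilin_add_right by (simp add: algebra_simps)
  have cong: "?S n m = ?S n' m" if "\<And>i. i \<in> G \<Longrightarrow> n i = n' i" for n n' m
    using that bilin_cong[of G n n' m m k] bilin_cong[of G m m n n' k] by simp
  have "0 \<le> ?S n (indicator E)" if "down_closed E" for E
    by (rule layer_cake_nonneg[where L = "\<lambda>n. ?S n (indicator E)",
          OF n layers_sym_nonneg[OF _ that] additive cong])
  then have "0 \<le> ?S (indicator E) n" if "down_closed E" for E
    using that by (simp add: add.commute)
  then have "0 \<le> ?S m n"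
    by (rule layer_cake_nonneg[where L = "\<lambda>m. ?S m n", OF m _ additive cong])
  then show ?thesis by (simp add: add.commute)
qed

lemma bilin_add_layer_ge:
  assumes layer_self: "1 \<le> bilin G k (indicator D) (indicator D)"
    and "m \<in> antitone_nonneg" "0 < v" "down_closed D"
    and "\<And>i. i \<in> G \<Longrightarrow> n i = v * indicator D i + m i"
  shows "v\<^sup>2 + bilin G k m m \<le> bilin G k n n"
proof -
  let ?cross = "bilin G k (indicator D) m + bilin G k m (indicator D)"
  have "bilin G k n n = bilin G k (\<lambda>i. v * indicator D i + m i) (\<lambda>i. v * indicator D i + m i)"
    using assms(5) by (intro bilin_cong) auto
  also have "\<dots> = v\<^sup>2 * bilin G k (indicator D) (indicator D) + v * ?cross + bilin G k m m"
    unfolding bilin_add_left bilin_add_right by (simp add: algebra_simps power2_eq_square)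
  finally have expand: "bilin G k n n = \<dots>" .
  have "0 \<le> ?cross"
    using bilin_sym_nonneg[OF indicator_antitone_nonneg[OF \<open>down_closed D\<close>] \<open>m \<in> antitone_nonneg\<close>] .
  then have "0 \<le> v * ?cross" using \<open>0 < v\<close> by simp
  moreover have "v\<^sup>2 \<le> v\<^sup>2 * bilin G k (indicator D) (indicator D)"
    using layer_self by (intro mult_le_cancel_left1[THEN iffD2]) auto
  ultimately show ?thesis using expand by linarith
qed

lemma sq_le_bilin_card_pos_supp:
  assumes layer_self: "\<And>D. down_closed D \<Longrightarrow> D \<noteq> {} \<Longrightarrow> 1 \<le> bilin G k (indicator D) (indicator D)"
    and "n \<in> antitone_nonneg"
  shows "\<forall>i\<in>G. (n i)\<^sup>2 \<le> bilin G k n n * card (pos_supp n)"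
  using assms(2)
proof (induction rule: antitone_nonneg_induct)
  case (zero n)
  then have "pos_supp n = {}" by (auto simp: pos_supp_def)
  with zero show ?case by simp
next
  case (layer n m v D)
  let ?Q = "\<lambda>n. bilin G k n n"
  have ident: "n i = v * indicator D i + m i" if "i \<in> G" for i
    using layer.hyps that by blast
  have m_nonneg: "0 \<le> m i" if "i \<in> G" for i
    using \<open>m \<in> antitone_nonneg\<close> that unfolding antitone_nonneg_def by auto
  have "D \<noteq> {}" using \<open>pos_supp m \<subset> D\<close> by blast
  then have Q_n: "v\<^sup>2 + ?Q m \<le> ?Q n"
    using layer_self layer.hyps by (intro bilin_add_layer_ge) auto
  have "0 \<le> ?Q m" using bilin_sym_nonneg[OF \<open>m \<in> antitone_nonneg\<close> \<open>m \<in> antitone_nonneg\<close>] by simp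
  then have "0 \<le> ?Q n" using Q_n zero_le_power2[of v] by linarith
  have "pos_supp n = D"
    using layer.hyps by (intro pos_supp_add_layer) auto
  then have "finite D" using finite_pos_supp by blast
  then have "card (pos_supp m) < card (pos_supp n)"
    unfolding \<open>pos_supp n = D\<close> using \<open>pos_supp m \<subset> D\<close> by (rule psubset_card_mono)
  then have card_n: "real (card (pos_supp m)) + 1 \<le> card (pos_supp n)"
    by linarith
  show ?case
  proof
    fix i assume "i \<in> G"
    show "(n i)\<^sup>2 \<le> ?Q n * card (pos_supp n)"
    proof (cases "i \<in> D")
      case True
      then have "(n i)\<^sup>2 = (v + m i)\<^sup>2" using ident \<open>i \<in> G\<close> by simp
      also have "\<dots> \<le> (v\<^sup>2 + ?Q m) * (real (card (pos_supp m)) + 1)"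
        using layer.IH \<open>i \<in> G\<close> \<open>0 \<le> ?Q m\<close> by (intro sq_add_le_mult_add_one) auto
      also have "\<dots> \<le> ?Q n * card (pos_supp n)"
        using Q_n card_n \<open>0 \<le> ?Q n\<close> by (intro mult_mono) auto
      finally show ?thesis .
    next
      case False
      then have "i \<notin> pos_supp m" using \<open>pos_supp m \<subset> D\<close> by blast
      then have "m i = 0" using m_nonneg[OF \<open>i \<in> G\<close>] \<open>i \<in> G\<close> unfolding pos_supp_def by simp
      then have "n i = 0" using ident[OF \<open>i \<in> G\<close>] False by simp
      then show ?thesis using \<open>0 \<le> ?Q n\<close> by simp
    qed
  qed
qed

end

end

section \<open>Young diagrams below the line a x + b y = a b\<close>

locale triangle =
  fixes a b :: int
  assumes one_less_a: "1 < a" and a_less_b: "a < b"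
begin

abbreviation "g \<equiv> gfun a b"
abbreviation "G \<equiv> Gset a b"

lemma gfun_Pair [simp]: "g (x, y) = a * b - a * x - b * y"
  by (simp add: gfun_def)

lemma mem_Gset_iff: "(x, y) \<in> G \<longleftrightarrow> 1 \<le> x \<and> 1 \<le> y \<and> a * x + b * y < a * b"
  by (auto simp: Gset_def)

lemma Gset_bounds:
  assumes "(x, y) \<in> G"
  shows "x < b" and "y < a"
proof -
  have xy: "1 \<le> x" "1 \<le> y" "a * x + b * y < a * b"
    using assms by (auto simp: mem_Gset_iff)
  show "x < b"
  proof (rule ccontr)
    assume "\<not> x < b"
    then have "a * b \<le> a * x" using one_less_a by (intro mult_left_mono) auto
    moreover have "0 < b * y" using xy one_less_a a_less_b by simp
    ultimately show False using xy by linarith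
  qed
  show "y < a"
  proof (rule ccontr)
    assume "\<not> y < a"
    then have "b * a \<le> b * y" using one_less_a a_less_b by (intro mult_left_mono) auto
    moreover have "0 < a * x" using xy one_less_a by simp
    ultimately show False using xy by (simp add: mult.commute)
  qed
qed

lemma finite_Gset: "finite G"
proof (rule finite_subset)
  show "G \<subseteq> {1..b} \<times> {1..a}"
    using Gset_bounds by (force simp: mem_Gset_iff)
qed simp

lemma one_one_mem_Gset: "(1, 1) \<in> G"
proof -
  have "1 * 2 \<le> (a - 1) * (b - 1)"
    using one_less_a a_less_b by (intro mult_mono) auto
  then show ?thesis by (simp add: mem_Gset_iff algebra_simps)
qed

lemma Gset_down:
  assumes "(x, y) \<in> G" "1 \<le> x'" "x' \<le> x" "1 \<le> y'" "y' \<le> y"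
  shows "(x', y') \<in> G"
proof -
  have "a * x' \<le> a * x" "b * y' \<le> b * y"
    using assms one_less_a a_less_b by (auto intro: mult_left_mono)
  then show ?thesis using assms by (auto simp: mem_Gset_iff)
qed

sublocale layer_cake G "\<lambda>j i. fst j \<le> fst i \<and> snd j \<le> snd i"
  by unfold_locales (rule finite_Gset)

lemma down_closedD:
  assumes D: "down_closed D" and "(x, y) \<in> D" "1 \<le> x'" "x' \<le> x" "1 \<le> y'" "y' \<le> y"
  shows "(x', y') \<in> D"
proof -
  have "(x, y) \<in> G" using assms(1,2) unfolding down_closed_def by auto
  then have "(x', y') \<in> G" using Gset_down assms(3-6) by blast
  then show ?thesis using assms unfolding down_closed_def by fastforce
qed

definition height :: "(int \<times> int) set \<Rightarrow> int \<Rightarrow> int" where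
  "height D x = Max (insert 0 {y. (x, y) \<in> D})"

lemma finite_column:
  assumes "down_closed D"
  shows "finite {y. (x, y) \<in> D}"
proof (rule finite_subset)
  show "{y. (x, y) \<in> D} \<subseteq> snd ` D" by force
  show "finite (snd ` D)"
    using finite_down_closed[OF assms] by simp
qed

lemma height_nonneg: "down_closed D \<Longrightarrow> 0 \<le> height D x"
  unfolding height_def using finite_column by simp

lemma mem_iff_le_height:
  assumes D: "down_closed D"
  shows "(x, y) \<in> D \<longleftrightarrow> 1 \<le> y \<and> y \<le> height D x"
proof
  assume xy: "(x, y) \<in> D"
  then have "(x, y) \<in> G" using D unfolding down_closed_def by auto
  moreover have "y \<le> height D x"
    unfolding height_def using xy finite_column[OF D] by simp
  ultimately show "1 \<le> y \<and> y \<le> height D x" by (simp add: mem_Gset_iff)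
next
  assume y: "1 \<le> y \<and> y \<le> height D x"
  have "height D x \<in> insert 0 {y. (x, y) \<in> D}"
    unfolding height_def using finite_column[OF D] by (intro Max_in) auto
  then have top: "(x, height D x) \<in> D" using y by auto
  then have "1 \<le> x" using D unfolding down_closed_def by (auto simp: mem_Gset_iff)
  then show "(x, y) \<in> D" using down_closedD[OF D top] y by simp
qed

lemma height_antimono:
  assumes D: "down_closed D" and "1 \<le> x" "x \<le> x'"
  shows "height D x' \<le> height D x"
proof (cases "height D x' = 0")
  case True
  then show ?thesis using height_nonneg[OF D] by simp
next
  case False
  then have "(x', height D x') \<in> D"
    using mem_iff_le_height[OF D] height_nonneg[OF D, of x'] by simp
  then have "(x, height D x') \<in> D"
    using down_closedD[OF D] assms(2,3) mem_iff_le_height[OF D] by blast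
  then show ?thesis using mem_iff_le_height[OF D] by blast
qed

lemma down_closed_eq_Sigma:
  assumes D: "down_closed D"
  shows "D = (SIGMA x:{1..b}. {1..height D x})"
proof (intro equalityI subsetI)
  fix p assume "p \<in> D"
  moreover obtain x y where p: "p = (x, y)" by (cases p)
  moreover have "(x, y) \<in> G" using \<open>p \<in> D\<close> D p unfolding down_closed_def by auto
  ultimately show "p \<in> (SIGMA x:{1..b}. {1..height D x})"
    using Gset_bounds(1) mem_iff_le_height[OF D] by (force simp: mem_Gset_iff)
next
  fix p assume "p \<in> (SIGMA x:{1..b}. {1..height D x})"
  then show "p \<in> D" using mem_iff_le_height[OF D] by auto
qed

section \<open>Telescoping the kernel along columns\<close>

definition kernel :: "int \<times> int \<Rightarrow> int \<times> int \<Rightarrow> real" where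
  "kernel i j = Kfun a b (g j - g i)"

definition window :: "int \<times> int \<Rightarrow> int \<times> int \<Rightarrow> bool" where
  "window p j \<longleftrightarrow> 0 \<le> g j - g p \<and> g j - g p < a"

lemma Kfun_eq: "Kfun a b d = of_bool (0 \<le> d \<and> d < a) - of_bool (b \<le> d \<and> d < a + b)"
  using one_less_a a_less_b by (auto simp: Kfun_def)

lemma kernel_telescope:
  "kernel (x, y) j = of_bool (window (x, y) j) - of_bool (window (x, y - 1) j)"
  by (cases j) (simp add: kernel_def Kfun_eq window_def algebra_simps)

definition layer_sum :: "(int \<times> int) set \<Rightarrow> (int \<times> int) set \<Rightarrow> real" where
  "layer_sum D E = (\<Sum>i\<in>D. \<Sum>j\<in>E. kernel i j)"

lemma layer_sum_columns:
  assumes D: "down_closed D" and "finite E"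
  shows "layer_sum D E = (\<Sum>x\<in>{1..b}.
    real (card {j\<in>E. window (x, height D x) j}) - real (card {j\<in>E. window (x, 0) j}))"
proof -
  have "layer_sum D E = (\<Sum>i\<in>(SIGMA x:{1..b}. {1..height D x}). \<Sum>j\<in>E. kernel i j)"
    unfolding layer_sum_def using down_closed_eq_Sigma[OF D]
    by (rule arg_cong[where f = "sum (\<lambda>i. \<Sum>j\<in>E. kernel i j)"])
  also have "\<dots> = (\<Sum>x\<in>{1..b}. \<Sum>y\<in>{1..height D x}. \<Sum>j\<in>E. kernel (x, y) j)"
    by (subst sum.Sigma) auto
  also have "\<dots> = (\<Sum>x\<in>{1..b}. \<Sum>j\<in>E. \<Sum>y\<in>{1..height D x}. kernel (x, y) j)"
    by (simp add: sum.swap[of _ E])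
  also have "\<dots> = (\<Sum>x\<in>{1..b}. \<Sum>j\<in>E.
      of_bool (window (x, height D x) j) - of_bool (window (x, 0) j))"
  proof -
    have "(\<Sum>y\<in>{1..height D x}. kernel (x, y) j) =
        of_bool (window (x, height D x) j) - of_bool (window (x, 0) j)" for x j
      unfolding kernel_telescope by (rule sum_int_telescope[OF height_nonneg[OF D]])
    then show ?thesis by simp
  qed
  finally show ?thesis
    using \<open>finite E\<close> by (simp add: sum_subtractf Int_def conj_commute)
qed

lemma window_shift: "window (x, c) (u, v) \<longleftrightarrow> window (x, 0) (u, v - c)"
  by (simp add: window_def algebra_simps)

lemma card_window_above_eq:
  assumes E: "down_closed E" and "0 \<le> c"
  shows "card {j\<in>E. window (x, c) j \<and> c < snd j}
       = card {w\<in>E. window (x, 0) w \<and> (fst w, snd w + c) \<in> E}"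
proof (rule bij_betw_same_card[of "\<lambda>(u, v). (u, v - c)"],
    rule bij_betw_byWitness[where f' = "\<lambda>(u, v). (u, v + c)"])
  have "(u, v - c) \<in> E" "window (x, 0) (u, v - c)"
    if "(u, v) \<in> E" "window (x, c) (u, v)" "c < v" for u v
    using that mem_iff_le_height[OF E] \<open>0 \<le> c\<close> window_shift by auto
  then show "(\<lambda>(u, v). (u, v - c)) ` {j\<in>E. window (x, c) j \<and> c < snd j}
      \<subseteq> {w\<in>E. window (x, 0) w \<and> (fst w, snd w + c) \<in> E}"
    by auto
  have "window (x, c) (u, v + c)" "c < v + c"
    if "(u, v) \<in> E" "window (x, 0) (u, v)" for u v
    using that mem_iff_le_height[OF E] window_shift[of x c u "v + c"] by auto
  then show "(\<lambda>(u, v). (u, v + c)) ` {w\<in>E. window (x, 0) w \<and> (fst w, snd w + c) \<in> E}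
      \<subseteq> {j\<in>E. window (x, c) j \<and> c < snd j}"
    by auto
qed auto

definition top_hits :: "(int \<times> int) set \<Rightarrow> (int \<times> int) set \<Rightarrow> (int \<times> (int \<times> int)) set" where
  "top_hits D E = (SIGMA x:{1..b}. {j\<in>E. window (x, height D x) j \<and> snd j \<le> height D x})"

definition bottom_misses :: "(int \<times> int) set \<Rightarrow> (int \<times> int) set \<Rightarrow> (int \<times> (int \<times> int)) set" where
  "bottom_misses D E = (SIGMA x:{1..b}. {w\<in>E. window (x, 0) w \<and> (fst w, snd w + height D x) \<notin> E})"

lemma layer_sum_eq_card_diff:
  assumes D: "down_closed D" and E: "down_closed E"
  shows "layer_sum D E = real (card (top_hits D E)) - real (card (bottom_misses D E))"
proof -
  have "finite E" using finite_down_closed[OF E] .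
  have column: "real (card {j\<in>E. window (x, c) j}) - real (card {j\<in>E. window (x, 0) j})
      = real (card {j\<in>E. window (x, c) j \<and> snd j \<le> c})
      - real (card {w\<in>E. window (x, 0) w \<and> (fst w, snd w + c) \<notin> E})"
    if "0 \<le> c" for x c
  proof -
    have "card {j\<in>E. window (x, c) j} + card {w\<in>E. window (x, 0) w \<and> (fst w, snd w + c) \<notin> E}
        = card {j\<in>E. window (x, c) j \<and> snd j \<le> c} + card {j\<in>E. window (x, 0) j}"
      using card_filter_split[OF \<open>finite E\<close>, of "window (x, c)" "\<lambda>j. snd j \<le> c"]
        card_filter_split[OF \<open>finite E\<close>, of "window (x, 0)" "\<lambda>w. (fst w, snd w + c) \<in> E"]
        card_window_above_eq[OF E that, of x]
      by (simp add: not_le)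
    then have "real (card {j\<in>E. window (x, c) j}
          + card {w\<in>E. window (x, 0) w \<and> (fst w, snd w + c) \<notin> E})
        = real (card {j\<in>E. window (x, c) j \<and> snd j \<le> c} + card {j\<in>E. window (x, 0) j})"
      by (rule arg_cong)
    then show ?thesis unfolding of_nat_add by linarith
  qed
  show ?thesis
    unfolding layer_sum_columns[OF D \<open>finite E\<close>] top_hits_def bottom_misses_def
    using \<open>finite E\<close> column[OF height_nonneg[OF D]] by (simp add: card_SigmaI sum_subtractf)
qed

(* The cell (u, v) of E is reflected in its column of E (v becomes height E u - v + 1) and moved
   right by the unique shift that puts its g-value into the window above the top cell (u, height E u). *)
definition miss_to_hit :: "(int \<times> int) set \<Rightarrow> int \<times> int \<times> int \<Rightarrow> int \<times> int \<times> int" where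
  "miss_to_hit E = (\<lambda>(x, u, v). (u, u + b * (v - 1) div a, height E u - v + 1))"

lemma miss_to_hit_mem_top_hits:
  assumes D: "down_closed D" and E: "down_closed E" and p: "p \<in> bottom_misses D E"
  shows "miss_to_hit E p \<in> top_hits E D"
proof -
  obtain x u v where p_eq: "p = (x, u, v)" by (cases p) auto
  have uv: "(u, v) \<in> E" and win: "window (x, 0) (u, v)" and miss: "(u, v + height D x) \<notin> E"
    using p unfolding p_eq bottom_misses_def by auto
  define e where "e = height E u"
  define q where "q = b * (v - 1) div a"
  define r where "r = b * (v - 1) mod a"
  have "1 \<le> v" "v \<le> e" using uv mem_iff_le_height[OF E] unfolding e_def by auto
  have "(u, v) \<in> G" using uv E unfolding down_closed_def by auto
  then have "1 \<le> u" "u < b" using Gset_bounds by (auto simp: mem_Gset_iff)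
  have "e < v + height D x"
    using miss mem_iff_le_height[OF E] height_nonneg[OF D, of x] \<open>1 \<le> v\<close> unfolding e_def by auto
  have qr: "a * q + r = b * (v - 1)"
    unfolding q_def r_def by (simp add: mult.commute)
  have "0 \<le> r" "r < a" using one_less_a unfolding r_def by auto
  have "0 \<le> q"
    using \<open>1 \<le> v\<close> one_less_a a_less_b unfolding q_def by (simp add: pos_imp_zdiv_nonneg_iff)
  have "b * v \<le> a * (x - u)" using win by (simp add: window_def algebra_simps)
  then have "a * q < a * (x - u)" using qr \<open>0 \<le> r\<close> a_less_b one_less_a by (simp add: algebra_simps)
  then have "q < x - u" using one_less_a by simp
  then have "height D x \<le> height D (u + q)"
    using \<open>1 \<le> u\<close> \<open>0 \<le> q\<close> by (intro height_antimono[OF D]) auto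
  then have "(u + q, e - v + 1) \<in> D"
    using mem_iff_le_height[OF D] \<open>v \<le> e\<close> \<open>e < v + height D x\<close> by auto
  moreover have "window (u, e) (u + q, e - v + 1)"
    using qr \<open>0 \<le> r\<close> \<open>r < a\<close> by (simp add: window_def algebra_simps)
  ultimately show ?thesis
    using \<open>1 \<le> u\<close> \<open>u < b\<close> \<open>1 \<le> v\<close>
    unfolding p_eq miss_to_hit_def top_hits_def e_def q_def by auto
qed

lemma window_zero_unique:
  assumes "window (x, 0) j" and "window (x', 0) j"
  shows "x = x'"
proof -
  have "a * (x - x') < a * 1" "a * (x' - x) < a * 1"
    using assms by (cases j, simp add: window_def algebra_simps)+
  then have "x - x' < 1" "x' - x < 1"
    using one_less_a by (simp_all only: mult_less_cancel_left_pos)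
  then show ?thesis by simp
qed

lemma inj_on_miss_to_hit: "inj_on (miss_to_hit E) (bottom_misses D E)"
proof (rule inj_onI)
  fix p p' assume "p \<in> bottom_misses D E" "p' \<in> bottom_misses D E"
    and eq: "miss_to_hit E p = miss_to_hit E p'"
  obtain x u v where p: "p = (x, u, v)" by (cases p) auto
  obtain x' u' v' where p': "p' = (x', u', v')" by (cases p') auto
  have "u = u'" "v = v'" using eq unfolding p p' miss_to_hit_def by auto
  then have "window (x, 0) (u, v)" "window (x', 0) (u, v)"
    using \<open>p \<in> bottom_misses D E\<close> \<open>p' \<in> bottom_misses D E\<close>
    unfolding p p' bottom_misses_def by auto
  then have "x = x'" by (rule window_zero_unique)
  then show "p = p'" using p p' \<open>u = u'\<close> \<open>v = v'\<close> by simp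
qed

lemma finite_top_hits: "down_closed E \<Longrightarrow> finite (top_hits D E)"
  unfolding top_hits_def using finite_down_closed by auto

lemma card_bottom_misses_le:
  assumes "down_closed D" "down_closed E"
  shows "card (bottom_misses D E) \<le> card (top_hits E D)"
  using miss_to_hit_mem_top_hits[OF assms] finite_top_hits[OF assms(1)]
  by (intro card_inj_on_le[OF inj_on_miss_to_hit]) auto

lemma miss_to_hit_ne_rightmost_top:
  assumes D: "down_closed D" and p: "p \<in> bottom_misses D D"
    and rightmost: "\<And>x y. (x, y) \<in> D \<Longrightarrow> x \<le> xm"
  shows "miss_to_hit D p \<noteq> (xm, xm, height D xm)"
proof
  assume hit: "miss_to_hit D p = (xm, xm, height D xm)"
  obtain x u v where p_eq: "p = (x, u, v)" by (cases p) auto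
  then have "u = xm" "v = 1" using hit unfolding miss_to_hit_def by auto
  then have "window (x, 0) (xm, 1)" "(xm, 1) \<in> D" "(xm, 1 + height D x) \<notin> D"
    using p unfolding p_eq bottom_misses_def by auto
  then have "height D x \<noteq> 0" by auto
  then have "(x, height D x) \<in> D"
    using mem_iff_le_height[OF D] height_nonneg[OF D, of x] by simp
  then have "x \<le> xm" by (rule rightmost)
  moreover have "b \<le> a * (x - xm)"
    using \<open>window (x, 0) (xm, 1)\<close> by (simp add: window_def algebra_simps)
  then have "0 < a * (x - xm)" using one_less_a a_less_b by linarith
  then have "xm < x" using one_less_a by (simp add: zero_less_mult_iff)
  ultimately show False by simp
qed

lemma card_bottom_misses_self_less:
  assumes D: "down_closed D" and "D \<noteq> {}"
  shows "card (bottom_misses D D) < card (top_hits D D)"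
proof -
  define xm where "xm = Max (fst ` D)"
  have "xm \<in> fst ` D"
    unfolding xm_def using finite_down_closed[OF D] \<open>D \<noteq> {}\<close> by (intro Max_in) auto
  then obtain ym where "(xm, ym) \<in> D" by force
  have rightmost: "x \<le> xm" if "(x, y) \<in> D" for x y
    unfolding xm_def using finite_down_closed[OF D] that by (intro Max_ge) force+
  have "(xm, ym) \<in> G" using \<open>(xm, ym) \<in> D\<close> D unfolding down_closed_def by auto
  then have "1 \<le> xm" "xm < b" using Gset_bounds by (auto simp: mem_Gset_iff)
  have "(xm, height D xm) \<in> D"
    using \<open>(xm, ym) \<in> D\<close> mem_iff_le_height[OF D] by auto
  then have top: "(xm, xm, height D xm) \<in> top_hits D D"
    unfolding top_hits_def window_def using \<open>1 \<le> xm\<close> \<open>xm < b\<close> one_less_a by auto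
  have "miss_to_hit D p \<noteq> (xm, xm, height D xm)" if "p \<in> bottom_misses D D" for p
    using miss_to_hit_ne_rightmost_top[where xm = xm, OF D that rightmost] .
  then have "miss_to_hit D ` bottom_misses D D \<subseteq> top_hits D D - {(xm, xm, height D xm)}"
    using miss_to_hit_mem_top_hits[OF D D] by (intro image_subsetI) simp
  then have "card (bottom_misses D D) \<le> card (top_hits D D - {(xm, xm, height D xm)})"
    using finite_top_hits[OF D] by (intro card_inj_on_le[OF inj_on_miss_to_hit]) auto
  also have "\<dots> < card (top_hits D D)"
    using finite_top_hits[OF D] top by (rule card_Diff1_less)
  finally show ?thesis .
qed

lemma layer_sum_sym_nonneg:
  assumes "down_closed D" "down_closed E"
  shows "0 \<le> layer_sum D E + layer_sum E D"
  using layer_sum_eq_card_diff[OF assms] layer_sum_eq_card_diff[OF assms(2,1)]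
    card_bottom_misses_le[OF assms] card_bottom_misses_le[OF assms(2,1)]
  by linarith

lemma layer_sum_self_ge_one:
  assumes "down_closed D" "D \<noteq> {}"
  shows "1 \<le> layer_sum D D"
  using layer_sum_eq_card_diff[OF assms(1,1)] card_bottom_misses_self_less[OF assms]
  by linarith

lemma bilin_kernel_indicator:
  assumes "down_closed D" "down_closed E"
  shows "bilin G kernel (indicator D) (indicator E) = layer_sum D E"
  using assms unfolding layer_sum_def down_closed_def by (intro bilin_indicator finite_G) auto

lemma bilin_kernel_sym_nonneg:
  assumes "n \<in> antitone_nonneg" "m \<in> antitone_nonneg"
  shows "0 \<le> bilin G kernel n m + bilin G kernel m n"
  using _ assms by (rule bilin_sym_nonneg) (simp add: bilin_kernel_indicator layer_sum_sym_nonneg)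

lemma sq_le_bilin_kernel:
  assumes "n \<in> antitone_nonneg" "i \<in> G"
  shows "(n i)\<^sup>2 \<le> bilin G kernel n n * card (pos_supp n)"
  using sq_le_bilin_card_pos_supp[of kernel n]
    bilin_kernel_indicator layer_sum_sym_nonneg layer_sum_self_ge_one assms
  by simp

lemma coneR_subset_antitone_nonneg: "coneR a b \<subseteq> antitone_nonneg"
proof
  fix n assume n: "n \<in> coneR a b"
  have "prec a b i j" if "fst j \<le> fst i" "snd j \<le> snd i" for i j :: "int \<times> int"
  proof -
    have "g j - g i = int (nat (fst i - fst j)) * a + int (nat (snd i - snd j)) * b"
      using that by (cases i, cases j) (simp add: algebra_simps)
    then show ?thesis unfolding prec_def numsemi_def by blast
  qed
  then show "n \<in> antitone_nonneg"
    using n unfolding coneR_def antitone_nonneg_def by blast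
qed

lemma Qform_eq_bilin: "Qform a b n = bilin G kernel n n"
  by (simp add: Qform_def bilin_def kernel_def)

lemma Bform_eq_bilin: "Bform a b n m = (bilin G kernel n m + bilin G kernel m n) / 2"
  by (simp add: Bform_def bilin_def kernel_def distrib_left sum.distrib)

lemma Bform_nonneg: "n \<in> coneR a b \<Longrightarrow> m \<in> coneR a b \<Longrightarrow> 0 \<le> Bform a b n m"
  unfolding Bform_eq_bilin using bilin_kernel_sym_nonneg coneR_subset_antitone_nonneg by fastforce

lemma supnorm_sq_div_card_le_Qform:
  assumes "n \<in> coneR a b"
  shows "(supnorm a b n)\<^sup>2 / card G \<le> Qform a b n"
proof -
  have n: "n \<in> antitone_nonneg" using assms coneR_subset_antitone_nonneg by blast
  have "G \<noteq> {}" using one_one_mem_Gset by auto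
  then have "supnorm a b n \<in> (\<lambda>i. \<bar>n i\<bar>) ` G"
    unfolding supnorm_def using finite_Gset by (intro Max_in) auto
  then obtain i where "i \<in> G" "supnorm a b n = \<bar>n i\<bar>" by auto
  have "0 \<le> bilin G kernel n n" using bilin_kernel_sym_nonneg[OF n n] by simp
  have "(supnorm a b n)\<^sup>2 = (n i)\<^sup>2" using \<open>supnorm a b n = \<bar>n i\<bar>\<close> by simp
  also have "\<dots> \<le> bilin G kernel n n * card (pos_supp n)"
    using sq_le_bilin_kernel[OF n \<open>i \<in> G\<close>] .
  also have "\<dots> \<le> bilin G kernel n n * card G"
    using \<open>0 \<le> bilin G kernel n n\<close> finite_Gset
    by (intro mult_left_mono) (auto simp: pos_supp_def intro!: card_mono)
  finally show ?thesis
    using \<open>G \<noteq> {}\<close> finite_Gset by (simp add: Qform_eq_bilin divide_le_eq card_gt_0_iff)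
qed

end

theorem theorem1p3:
  fixes a b :: int
  assumes "1 < a" and "a < b" and "coprime a b"
  shows "(\<forall>n\<in>coneR a b. \<forall>n'\<in>coneR a b. Bform a b n n' \<ge> 0)
       \<and> (\<forall>n\<in>coneR a b. Qform a b n \<ge> 0)
       \<and> (\<forall>n\<in>coneR a b. Qform a b n \<ge> (supnorm a b n)\<^sup>2 / real (card (Gset a b)))"
proof -
  interpret triangle a b using assms(1,2) by unfold_locales
  have "Qform a b n = Bform a b n n" for n
    by (simp add: Qform_eq_bilin Bform_eq_bilin)
  then show ?thesis using Bform_nonneg supnorm_sq_div_card_le_Qform by auto
qed

end
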